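(* Let $d_G$ be a generalized distance on graphs (for example the shortest-path distance), and consider graphs with at most $n$ nodes. A Powerful Plain Graph Transformer (PPGT) whose graph positional encoding is given by $d_G$ is as powerful as the GD-WL test with distance $d_G$ in distinguishing non-isomorphic graphs, i.e., for every pair of graphs with at most $n$ nodes that GD-WL distinguishes there is a PPGT that distinguishes them, provided the functions $\phi$ and $\theta$ in its attention are chosen appropriately and the numbers of attention heads and layers are sufficiently large.
   Context: Graphs $G=(\mathcal V,\mathcal E)$ are finite. A generalized distance assigns to every pair of nodes $u,v$ of a graph $G$ a value $d_G(u,v)$ (e.g. shortest-path distance, resistance distance), invariant under graph isomorphism. GD-WL test: starting from initial node colors $\chi^0_G(v)$, iterate $\chi^{\ell}_G(v)=\mathrm{hash}(\{\!\{(d_G(v,u),\chi^{\ell-1}_G(u)) : u\in\mathcal V\}\!\})$, where $\{\!\{\cdot\}\!\}$ denotes a multiset and hash is injective; after $L$ iterations the graph color is the hash of the multiset $\{\!\{\chi^L_G(v): v\in\mathcal V\}\!\}$. GD-WL distinguishes two graphs if their graph colors differ. PPGT: each node $i$ is a token $x_i\in\mathbb R^D$ (initialized from node attributes), and each node pair $(i,j)$ carries a relative positional embedding $p_{ij}$ computed from the positional encoding (here from $d_G(i,j)$) by an MLP-based stem. Each layer is a pre-norm Transformer block: $\hat X = X + \mathrm{MSA}(\mathrm{Norm}(X),P)$, $X' = \hat X + \mathrm{MLP}(\mathrm{Norm}(\hat X))$, where MLP is a two-layer perceptron and Norm is a token-wise normalization. In each head $h$ of the multihead self-attention MSA, with queries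 $q_i=W_Q^h x_i$, keys $k_j=W_K^h x_j$, values $W_V^h x_j$, the attention weights are $\alpha_{ij}=\phi^h(p_{ij})\cdot \mathrm{Softmax}_j\big(\tfrac{q_i^\top k_j}{\sqrt D}-\tfrac{k_j^\top k_j}{2\sqrt D}+\theta^h(p_{ij})\big)$, with $\mathrm{Softmax}_j(a_{ij})=\exp(a_{ij})/\sum_{j'}\exp(a_{ij'})$ over all nodes $j'$ of the graph, and the head output at node $i$ is $\sum_j \alpha_{ij} W_O^h W_V^h x_j$; head outputs are summed/concatenated. A graph-level output is obtained by sum pooling of final node representations followed by an MLP. A PPGT distinguishes two graphs if its graph-level outputs differ. *)

theory Defs
  imports Complex_Main "HOL-Library.Multiset"
begin

record graph =
  gsize :: nat
  gadj  :: "nat \<Rightarrow> nat \<Rightarrow> bool"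
  gattr :: "nat \<Rightarrow> real list"

definition wf_graph :: "nat \<Rightarrow> graph \<Rightarrow> bool" where
  "wf_graph m G \<longleftrightarrow>
     (\<forall>i<gsize G. length (gattr G i) = m) \<and>
     (\<forall>i j. gadj G i j \<longrightarrow> i < gsize G \<and> j < gsize G) \<and>
     (\<forall>i j. gadj G i j \<longrightarrow> gadj G j i) \<and>
     (\<forall>i. \<not> gadj G i i)"

definition iso_via :: "(nat \<Rightarrow> nat) \<Rightarrow> graph \<Rightarrow> graph \<Rightarrow> bool" where
  "iso_via \<pi> G H \<longleftrightarrow>
     gsize G = gsize H \<and>
     bij_betw \<pi> {..<gsize G} {..<gsize H} \<and>
     (\<forall>i<gsize G. \<forall>j<gsize G. gadj H (\<pi> i) (\<pi> j) = gadj G i j) \<and>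
     (\<forall>i<gsize G. gattr H (\<pi> i) = gattr G i)"

definition gen_dist :: "nat \<Rightarrow> (graph \<Rightarrow> nat \<Rightarrow> nat \<Rightarrow> real) \<Rightarrow> bool" where
  "gen_dist m d \<longleftrightarrow>
     (\<forall>G H \<pi>. wf_graph m G \<and> wf_graph m H \<and> iso_via \<pi> G H \<longrightarrow>
        (\<forall>u<gsize G. \<forall>v<gsize G. d H (\<pi> u) (\<pi> v) = d G u v))"

text \<open>Colours are built with injective constructors, which plays the role of the injective hash.\<close>

datatype color = Init "real list" | Refine "(real \<times> color) multiset"

fun wl_color :: "(graph \<Rightarrow> nat \<Rightarrow> nat \<Rightarrow> real) \<Rightarrow> graph \<Rightarrow> nat \<Rightarrow> nat \<Rightarrow> color" where
  "wl_color d G 0 v = Init (gattr G v)"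
| "wl_color d G (Suc l) v =
     Refine (image_mset (\<lambda>u. (d G v u, wl_color d G l u)) (mset_set {..<gsize G}))"

definition wl_graph_color :: "(graph \<Rightarrow> nat \<Rightarrow> nat \<Rightarrow> real) \<Rightarrow> graph \<Rightarrow> nat \<Rightarrow> color multiset" where
  "wl_graph_color d G L = image_mset (wl_color d G L) (mset_set {..<gsize G})"

definition gdwl_distinguishes :: "(graph \<Rightarrow> nat \<Rightarrow> nat \<Rightarrow> real) \<Rightarrow> graph \<Rightarrow> graph \<Rightarrow> bool" where
  "gdwl_distinguishes d G H \<longleftrightarrow> (\<exists>L. wl_graph_color d G L \<noteq> wl_graph_color d H L)"

type_synonym vec = "nat \<Rightarrow> real"
type_synonym mat = "nat \<Rightarrow> nat \<Rightarrow> real"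

definition mv :: "nat \<Rightarrow> mat \<Rightarrow> vec \<Rightarrow> vec" where
  "mv n M v = (\<lambda>i. \<Sum>j<n. M i j * v j)"

definition dotp :: "nat \<Rightarrow> vec \<Rightarrow> vec \<Rightarrow> real" where
  "dotp n u v = (\<Sum>j<n. u j * v j)"

definition relu :: "vec \<Rightarrow> vec" where
  "relu v = (\<lambda>i. max 0 (v i))"

record mlp =
  m_hid :: nat
  m_W1  :: mat
  m_b1  :: vec
  m_W2  :: mat
  m_b2  :: vec

definition apply_mlp :: "nat \<Rightarrow> mlp \<Rightarrow> vec \<Rightarrow> vec" where
  "apply_mlp n M x =
     (\<lambda>i. mv (m_hid M) (m_W2 M) (relu (\<lambda>k. mv n (m_W1 M) x k + m_b1 M k)) i + m_b2 M i)"

definition layernorm :: "nat \<Rightarrow> real \<Rightarrow> vec \<Rightarrow> vec \<Rightarrow> vec \<Rightarrow> vec" where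
  "layernorm D eps g b x =
     (let mu = (\<Sum>c<D. x c) / real D;
          var = (\<Sum>c<D. (x c - mu)^2) / real D
      in (\<lambda>c. g c * (x c - mu) / sqrt (var + eps) + b c))"

record layer =
  WQ :: "nat \<Rightarrow> mat"
  WK :: "nat \<Rightarrow> mat"
  WV :: "nat \<Rightarrow> mat"
  WO :: "nat \<Rightarrow> mat"
  phi :: "nat \<Rightarrow> vec \<Rightarrow> real"
  theta :: "nat \<Rightarrow> vec \<Rightarrow> real"
  n1g :: vec
  n1b :: vec
  n2g :: vec
  n2b :: vec
  ffn :: mlp

record ppgt =
  dim :: nat
  pdim :: nat
  nheads :: nat
  nlayers :: nat
  eps :: real
  Win :: mat
  bin :: vec
  stem :: mlp
  layers :: "nat \<Rightarrow> layer"
  readout :: mlp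
  outdim :: nat

definition pos_emb :: "ppgt \<Rightarrow> (graph \<Rightarrow> nat \<Rightarrow> nat \<Rightarrow> real) \<Rightarrow> graph \<Rightarrow> nat \<Rightarrow> nat \<Rightarrow> vec" where
  "pos_emb P d G i j = apply_mlp 1 (stem P) (\<lambda>_. d G i j)"

definition init_tokens :: "nat \<Rightarrow> ppgt \<Rightarrow> graph \<Rightarrow> nat \<Rightarrow> vec" where
  "init_tokens m P G i = (\<lambda>c. (\<Sum>j<m. Win P c j * (gattr G i ! j)) + bin P c)"

definition att_weight :: "ppgt \<Rightarrow> layer \<Rightarrow> nat \<Rightarrow> (nat \<Rightarrow> nat \<Rightarrow> vec) \<Rightarrow> nat \<Rightarrow> (nat \<Rightarrow> vec) \<Rightarrow> nat \<Rightarrow> nat \<Rightarrow> real" where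
  "att_weight P Lr h p k Y i j =
     (let D = dim P;
          q = (\<lambda>a. mv D (WQ Lr h) (Y a));
          kk = (\<lambda>a. mv D (WK Lr h) (Y a));
          score = (\<lambda>a. dotp D (q i) (kk a) / sqrt (real D)
                       - dotp D (kk a) (kk a) / (2 * sqrt (real D))
                       + theta Lr h (p i a))
      in phi Lr h (p i j) * (exp (score j) / (\<Sum>j'<k. exp (score j'))))"

definition msa :: "ppgt \<Rightarrow> layer \<Rightarrow> (nat \<Rightarrow> nat \<Rightarrow> vec) \<Rightarrow> nat \<Rightarrow> (nat \<Rightarrow> vec) \<Rightarrow> nat \<Rightarrow> vec" where
  "msa P Lr p k Y i =
     (\<lambda>c. \<Sum>h<nheads P. \<Sum>j<k.
            att_weight P Lr h p k Y i j * mv (dim P) (WO Lr h) (mv (dim P) (WV Lr h) (Y j)) c)"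

definition block :: "ppgt \<Rightarrow> layer \<Rightarrow> (nat \<Rightarrow> nat \<Rightarrow> vec) \<Rightarrow> nat \<Rightarrow> (nat \<Rightarrow> vec) \<Rightarrow> (nat \<Rightarrow> vec)" where
  "block P Lr p k X =
     (let D = dim P;
          Y = (\<lambda>i. layernorm D (eps P) (n1g Lr) (n1b Lr) (X i));
          Xh = (\<lambda>i c. X i c + msa P Lr p k Y i c)
      in (\<lambda>i c. Xh i c + apply_mlp D (ffn Lr) (layernorm D (eps P) (n2g Lr) (n2b Lr) (Xh i)) c))"

fun tokens :: "nat \<Rightarrow> ppgt \<Rightarrow> (graph \<Rightarrow> nat \<Rightarrow> nat \<Rightarrow> real) \<Rightarrow> graph \<Rightarrow> nat \<Rightarrow> nat \<Rightarrow> vec" where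
  "tokens m P d G 0 = init_tokens m P G"
| "tokens m P d G (Suc l) = block P (layers P l) (pos_emb P d G) (gsize G) (tokens m P d G l)"

definition ppgt_output :: "nat \<Rightarrow> ppgt \<Rightarrow> (graph \<Rightarrow> nat \<Rightarrow> nat \<Rightarrow> real) \<Rightarrow> graph \<Rightarrow> vec" where
  "ppgt_output m P d G =
     apply_mlp (dim P) (readout P) (\<lambda>c. \<Sum>i<gsize G. tokens m P d G (nlayers P) i c)"

definition valid_ppgt :: "ppgt \<Rightarrow> bool" where
  "valid_ppgt P \<longleftrightarrow> 0 < eps P"

definition ppgt_distinguishes :: "nat \<Rightarrow> (graph \<Rightarrow> nat \<Rightarrow> nat \<Rightarrow> real) \<Rightarrow> ppgt \<Rightarrow> graph \<Rightarrow> graph \<Rightarrow> bool" where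
  "ppgt_distinguishes m d P G H \<longleftrightarrow>
     (\<exists>c<outdim P. ppgt_output m P d G c \<noteq> ppgt_output m P d H c)"

end

theory Submission
  imports Defs "HOL-Library.Countable_Set"
begin

text \<open>GD-WL refines the colour of a node by the multiset of pairs (distance, colour) over all
  nodes. A transformer of width \<open>N + 2\<close> keeps the current colour of each node as a one-hot vector.
  With zero keys and \<open>\<theta> = 0\<close> the attention is uniform; with \<open>\<phi>(p\<^sub>i\<^sub>j) = N^(N * r(d(i,j)))\<close>, where \<open>r\<close>
  enumerates the finitely many distance values, and a value map reading the one-hot vector of
  colour index \<open>c\<close> as \<open>N^c\<close>, one head computes, up to a constant factor, the sum of
  \<open>N^(N * r(d(i,j)) + c\<^sub>j)\<close> over all nodes \<open>j\<close>. Fewer than \<open>N\<close> nodes contribute, so the base-\<open>N\<close> digits of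
  this sum are the multiplicities of the pairs, i.e. they determine the next colour. Layer
  normalization is injective on vectors sharing a zero coordinate, and a two-layer ReLU network
  interpolates any function on finitely many points, so the feed-forward part can replace each
  token by the one-hot vector of the new colour. Sum pooling then yields the colour histogram.
  Graphs of different sizes are separated already at level 0.

  The network is built for the two given graphs only.\<close>

section \<open>Interpolation by two-layer ReLU networks\<close>

lemma separating_linear_functional:
  fixes S :: "vec set"
  assumes "finite S"
  shows "\<exists>w. \<forall>x\<in>S. \<forall>y\<in>S. dotp D w x = dotp D w y \<longrightarrow> (\<forall>c<D. x c = y c)"
proof (induction D)
  case 0
  then show ?case by simp
next
  case (Suc D)
  then obtain w where w: "\<forall>x\<in>S. \<forall>y\<in>S. dotp D w x = dotp D w y \<longrightarrow> (\<forall>c<D. x c = y c)"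
    by blast
  \<comment> \<open>the new weight only has to avoid the finitely many values that would merge two points\<close>
  define bad where "bad = (\<lambda>(x, y). dotp D w (\<lambda>c. y c - x c) / (x D - y D)) ` (S \<times> S)"
  have "finite bad"
    unfolding bad_def using assms by simp
  then obtain v :: real where v: "v \<notin> bad"
    using ex_new_if_finite infinite_UNIV_char_0 by blast
  have dotp_Suc: "dotp (Suc D) (w(D := v)) z = dotp D w z + v * z D" for z
    unfolding dotp_def by (simp add: lessThan_Suc)
  have "\<forall>c<Suc D. x c = y c"
    if x: "x \<in> S" and y: "y \<in> S" and eq: "dotp (Suc D) (w(D := v)) x = dotp (Suc D) (w(D := v)) y" for x y
  proof -
    have eq': "dotp D w x + v * x D = dotp D w y + v * y D"
      using eq by (simp only: dotp_Suc)
    have last: "x D = y D"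
    proof (rule ccontr)
      assume ne: "x D \<noteq> y D"
      have "dotp D w (\<lambda>c. y c - x c) = v * (x D - y D)"
        using eq' unfolding dotp_def by (simp add: right_diff_distrib sum_subtractf algebra_simps)
      then have "v = dotp D w (\<lambda>c. y c - x c) / (x D - y D)"
        using ne by simp
      then have "v \<in> bad"
        unfolding bad_def using x y by force
      with v show False by simp
    qed
    then have "\<forall>c<D. x c = y c"
      using w x y eq' by simp
    with last show ?thesis
      using less_Suc_eq by auto
  qed
  then show ?case by blast
qed

lemma relu_ramp_interpolation:
  fixes T :: "real set" and g :: "real \<Rightarrow> vec"
  assumes "finite T"
  shows "\<exists>(K::nat) \<tau> a b. \<forall>t\<in>T. \<forall>c. b c + (\<Sum>k<K. a k c * max 0 (t - \<tau> k)) = g t c"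
  using assms
proof (induction T rule: finite_linorder_max_induct)
  case empty
  then show ?case by simp
next
  case (insert t0 A)
  obtain K :: nat and \<tau> a b where IH: "\<forall>t\<in>A. \<forall>c. b c + (\<Sum>k<K. a k c * max 0 (t - \<tau> k)) = g t c"
    using insert.IH by blast
  \<comment> \<open>a ramp starting between \<open>A\<close> and \<open>t0\<close> corrects the value at \<open>t0\<close> without changing it on \<open>A\<close>\<close>
  obtain s where s_ge: "\<And>t. t \<in> A \<Longrightarrow> t \<le> s" and s_less: "s < t0"
  proof (cases "A = {}")
    case True
    show ?thesis by (rule that[of "t0 - 1"]) (simp_all add: True)
  next
    case False
    show ?thesis by (rule that[of "Max A"]) (simp_all add: insert False)
  qed
  define f where "f c = b c + (\<Sum>k<K. a k c * max 0 (t0 - \<tau> k))" for c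
  define a' where "a' = a(K := (\<lambda>c. (g t0 c - f c) / (t0 - s)))"
  define \<tau>' where "\<tau>' = \<tau>(K := s)"
  have sum_Suc: "(\<Sum>k<Suc K. a' k c * max 0 (t - \<tau>' k))
      = (\<Sum>k<K. a k c * max 0 (t - \<tau> k)) + a' K c * max 0 (t - s)" for t c
    by (simp add: lessThan_Suc a'_def \<tau>'_def)
  have "b c + (\<Sum>k<Suc K. a' k c * max 0 (t - \<tau>' k)) = g t c" if "t \<in> insert t0 A" for t c
  proof (cases "t = t0")
    case True
    have "a' K c * max 0 (t0 - s) = g t0 c - f c"
      using s_less by (simp add: a'_def)
    then show ?thesis
      unfolding sum_Suc True by (simp add: f_def)
  next
    case False
    then show ?thesis
      unfolding sum_Suc using that IH s_ge[of t] by simp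
  qed
  then show ?case by blast
qed

lemma mlp_interpolation:
  fixes I :: "'i set" and x f :: "'i \<Rightarrow> vec"
  assumes fin: "finite I"
    and well_defined: "\<And>i j. i \<in> I \<Longrightarrow> j \<in> I \<Longrightarrow> (\<forall>c<D. x i c = x j c) \<Longrightarrow> f i = f j"
  shows "\<exists>M. \<forall>i\<in>I. apply_mlp D M (x i) = f i"
proof -
  obtain w where w: "\<forall>u\<in>x ` I. \<forall>v\<in>x ` I. dotp D w u = dotp D w v \<longrightarrow> (\<forall>c<D. u c = v c)"
    using separating_linear_functional[of "x ` I" D] fin by blast
  define t where "t i = dotp D w (x i)" for i
  define g where "g s = f (inv_into I t s)" for s
  obtain K :: nat and \<tau> a b where ramps: "\<forall>s\<in>t ` I. \<forall>c. b c + (\<Sum>k<K. a k c * max 0 (s - \<tau> k)) = g s c"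
    using relu_ramp_interpolation[of "t ` I" g] fin by blast
  have g_t: "g (t i) = f i" if "i \<in> I" for i
  proof -
    define j where "j = inv_into I t (t i)"
    have j: "j \<in> I" "t j = t i"
      unfolding j_def using that by (simp_all add: inv_into_into f_inv_into_f)
    then have "\<forall>c<D. x j c = x i c"
      using w that unfolding t_def by blast
    then show ?thesis
      unfolding g_def j_def[symmetric] using well_defined j(1) that by blast
  qed
  define M where "M = \<lparr>m_hid = K, m_W1 = (\<lambda>k. w), m_b1 = (\<lambda>k. - \<tau> k), m_W2 = (\<lambda>c k. a k c), m_b2 = b\<rparr>"
  have "apply_mlp D M (x i) c = f i c" if "i \<in> I" for i c
  proof -
    have "apply_mlp D M (x i) c = b c + (\<Sum>k<K. a k c * max 0 (t i - \<tau> k))"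
      unfolding apply_mlp_def M_def mv_def relu_def t_def dotp_def by (simp add: add.commute)
    also have "\<dots> = f i c"
      using ramps that g_t by auto
    finally show ?thesis .
  qed
  then show ?thesis by blast
qed

section \<open>Layer normalization\<close>

definition ln_mean :: "nat \<Rightarrow> vec \<Rightarrow> real" where
  "ln_mean D x = (\<Sum>c<D. x c) / real D"

definition ln_scale :: "nat \<Rightarrow> real \<Rightarrow> vec \<Rightarrow> real" where
  "ln_scale D e x = sqrt ((\<Sum>c<D. (x c - ln_mean D x)^2) / real D + e)"

lemma layernorm_plain:
  "layernorm D e (\<lambda>_. 1) (\<lambda>_. 0) x c = (x c - ln_mean D x) / ln_scale D e x"
  unfolding layernorm_def ln_mean_def ln_scale_def Let_def by simp

lemma ln_scale_pos: "0 < e \<Longrightarrow> 0 < ln_scale D e x"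
  unfolding ln_scale_def by (simp add: sum_nonneg add_nonneg_pos)

lemma layernorm_plain_diff:
  "layernorm D e (\<lambda>_. 1) (\<lambda>_. 0) x c - layernorm D e (\<lambda>_. 1) (\<lambda>_. 0) x c'
     = (x c - x c') / ln_scale D e x"
  unfolding layernorm_plain by (simp add: diff_divide_distrib)

text \<open>Layer normalization forgets the mean and the scale of a vector; on vectors sharing a zero
  coordinate the mean is pinned down, and since \<open>e > 0\<close> the scale is too.\<close>

lemma layernorm_plain_inj:
  assumes "0 < e" and "c0 < D" and "x c0 = 0" and "y c0 = 0"
    and eq: "\<And>c. c < D \<Longrightarrow> layernorm D e (\<lambda>_. 1) (\<lambda>_. 0) x c = layernorm D e (\<lambda>_. 1) (\<lambda>_. 0) y c"
    and "c < D"
  shows "x c = y c"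
proof -
  define sx sy where "sx = ln_scale D e x" and "sy = ln_scale D e y"
  have sx: "0 < sx" and sy: "0 < sy"
    unfolding sx_def sy_def using ln_scale_pos[OF \<open>0 < e\<close>] by auto
  define \<rho> where "\<rho> = sy / sx"
  have y_eq: "y c = \<rho> * x c" if "c < D" for c
  proof -
    have "x c / sx = y c / sy"
      using layernorm_plain_diff[of D e x c c0] layernorm_plain_diff[of D e y c c0]
        eq[OF that] eq[OF \<open>c0 < D\<close>] assms(3,4) unfolding sx_def sy_def by simp
    then show ?thesis
      unfolding \<rho>_def using sx sy by (simp add: field_simps)
  qed
  have "ln_mean D y = \<rho> * ln_mean D x"
    unfolding ln_mean_def by (simp add: sum_distrib_left y_eq)
  then have "(\<Sum>c<D. (y c - ln_mean D y)^2) = \<rho>^2 * (\<Sum>c<D. (x c - ln_mean D x)^2)"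
    by (simp add: sum_distrib_left y_eq power_mult_distrib flip: right_diff_distrib)
  then have "sy^2 = \<rho>^2 * (sx^2 - e) + e"
    using sx sy \<open>0 < e\<close> unfolding sx_def sy_def ln_scale_def
    by (simp add: sum_nonneg add_nonneg_pos)
  moreover have "sy^2 = \<rho>^2 * sx^2"
    unfolding \<rho>_def using sx by (simp add: power_divide)
  ultimately have "\<rho>^2 = 1"
    using \<open>0 < e\<close> by (simp add: algebra_simps)
  moreover have "0 < \<rho>"
    unfolding \<rho>_def using sx sy by simp
  ultimately have "\<rho> = 1"
    by (auto simp: power2_eq_1_iff)
  then show ?thesis
    using y_eq[OF \<open>c < D\<close>] by simp
qed

definition onehot :: "nat \<Rightarrow> vec" where
  "onehot a = (\<lambda>c. if c = a then 1 else 0)"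

lemma sum_onehot:
  assumes "a < D"
  shows "(\<Sum>c<D. h (onehot a c)) = h 1 + real (D - 1) * h 0"
proof -
  have "(\<Sum>c<D. h (onehot a c)) = h (onehot a a) + (\<Sum>c\<in>{..<D} - {a}. h (onehot a c))"
    using assms by (simp add: sum.remove)
  also have "(\<Sum>c\<in>{..<D} - {a}. h (onehot a c)) = (\<Sum>c\<in>{..<D} - {a}. h 0)"
    by (rule sum.cong) (auto simp: onehot_def)
  finally show ?thesis
    using assms by (simp add: onehot_def)
qed

lemma ln_scale_onehot:
  assumes "a < D" and "b < D"
  shows "ln_scale D e (onehot a) = ln_scale D e (onehot b)"
proof -
  have "ln_mean D (onehot a) = 1 / real D" if "a < D" for a
    unfolding ln_mean_def using sum_onehot[OF that, of "\<lambda>t. t"] by simp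
  then show ?thesis
    unfolding ln_scale_def using assms sum_onehot[of _ D "\<lambda>t. (t - 1 / real D)^2"] by simp
qed

section \<open>Base-\<open>b\<close> expansions of multisets\<close>

lemma base_expansion_inj:
  fixes b :: nat
  assumes "\<forall>x<n. f x < b" and "\<forall>x<n. g x < b"
    and "(\<Sum>x<n. f x * b^x) = (\<Sum>x<n. g x * b^x)" and "x < n"
  shows "f x = g x"
  using assms
proof (induction n arbitrary: f g x)
  case 0
  then show ?case by simp
next
  case (Suc n)
  have shift: "(\<Sum>x<Suc n. h x * b^x) = h 0 + b * (\<Sum>x<n. h (Suc x) * b^x)" for h
    unfolding sum.lessThan_Suc_shift by (simp add: sum_distrib_left algebra_simps)
  have eq: "f 0 + b * (\<Sum>x<n. f (Suc x) * b^x) = g 0 + b * (\<Sum>x<n. g (Suc x) * b^x)"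
    using Suc.prems(3) unfolding shift .
  have "f 0 < b" "g 0 < b"
    using Suc.prems(1,2) by auto
  then have "f 0 = g 0" and "(\<Sum>x<n. f (Suc x) * b^x) = (\<Sum>x<n. g (Suc x) * b^x)"
    using arg_cong[OF eq, of "\<lambda>t. t mod b"] arg_cong[OF eq, of "\<lambda>t. t div b"] by simp_all
  moreover have "f (Suc y) = g (Suc y)" if "y < n" for y
    using Suc.IH[of "\<lambda>x. f (Suc x)" "\<lambda>x. g (Suc x)" y] Suc.prems(1,2) that calculation(2) by simp
  ultimately show ?case
    using Suc.prems(4) by (cases x) simp_all
qed

lemma sum_mset_power_eq_sum_count:
  fixes b :: nat
  assumes "set_mset M \<subseteq> {..<n}"
  shows "(\<Sum>x\<in>#M. b^x) = (\<Sum>x<n. count M x * b^x)"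
  using assms
proof (induction M)
  case empty
  then show ?case by simp
next
  case (add y M)
  then have "y < n" by simp
  have "(\<Sum>x<n. count (add_mset y M) x * b^x) = (\<Sum>x<n. count M x * b^x + (if x = y then b^x else 0))"
    by (rule sum.cong) (simp_all add: algebra_simps)
  also have "\<dots> = (\<Sum>x<n. count M x * b^x) + b^y"
    using \<open>y < n\<close> by (simp add: sum.distrib)
  finally show ?case
    using add by simp
qed

text \<open>A multiset of exponents can be read off from \<open>\<Sum>x\<in>#M. b^x\<close> as the base-\<open>b\<close> digits,
  as long as no multiplicity reaches \<open>b\<close>.\<close>

lemma sum_mset_power_inj:
  fixes b :: nat
  assumes "size M1 < b" and "size M2 < b"
    and eq: "(\<Sum>x\<in>#M1. b^x) = (\<Sum>x\<in>#M2. b^x)"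
  shows "M1 = M2"
proof -
  obtain n where n: "set_mset M1 \<union> set_mset M2 \<subseteq> {..<n}"
    using finite_nat_iff_bounded[of "set_mset M1 \<union> set_mset M2"] by auto
  have "count M x < b" if "M = M1 \<or> M = M2" for M x
    using that assms(1,2) count_le_size[of M x] by auto
  moreover have "(\<Sum>x<n. count M1 x * b^x) = (\<Sum>x<n. count M2 x * b^x)"
    using eq n sum_mset_power_eq_sum_count[of M1 n b] sum_mset_power_eq_sum_count[of M2 n b] by simp
  ultimately have "count M1 x = count M2 x" if "x < n" for x
    using base_expansion_inj[of n "count M1" b "count M2" x] that by blast
  moreover have "count M1 x = 0" "count M2 x = 0" if "\<not> x < n" for x
    using n that by (auto simp: count_eq_zero_iff)
  ultimately show ?thesis
    by (metis multiset_eqI)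
qed

lemma image_mset_inj_on_eq:
  assumes "inj_on f (set_mset A \<union> set_mset B)" and "image_mset f A = image_mset f B"
  shows "A = B"
  using image_mset_eq_image_mset_plusD[of f A B "{#}"] assms by auto

lemma inj_on_mixed_radix:
  fixes f :: "'a \<Rightarrow> nat" and g :: "'b \<Rightarrow> nat"
  assumes "inj_on f A" and "inj_on g B" and "g ` B \<subseteq> {..<N}"
  shows "inj_on (\<lambda>(x, y). N * f x + g y) (A \<times> B)"
proof (rule inj_onI, clarify)
  fix x y x' y'
  assume mem: "x \<in> A" "y \<in> B" "x' \<in> A" "y' \<in> B" and eq: "N * f x + g y = N * f x' + g y'"
  have "g y < N" "g y' < N"
    using mem assms(3) by auto
  then have "g y = g y'" and "f x = f x'"
    using arg_cong[OF eq, of "\<lambda>t. t mod N"] arg_cong[OF eq, of "\<lambda>t. t div N"] by simp_all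
  then show "x = x' \<and> y = y'"
    using mem assms(1,2) by (meson inj_onD)
qed

section \<open>A PPGT simulating GD-WL\<close>

text \<open>Based on \<open>t = max 0 t - max 0 (- t)\<close>, so that negative values pass as well.\<close>

definition id_mlp :: "nat \<Rightarrow> mlp" where
  "id_mlp D =
     (let W = (\<lambda>k c. if k = c then 1 else if k = D + c then -1 else 0)
      in \<lparr>m_hid = 2 * D, m_W1 = W, m_b1 = (\<lambda>_. 0), m_W2 = (\<lambda>c k. W k c), m_b2 = (\<lambda>_. 0)\<rparr>)"

lemma apply_id_mlp:
  assumes "c < D"
  shows "apply_mlp D (id_mlp D) x c = x c"
proof -
  define W :: mat where "W = (\<lambda>k c. if k = c then 1 else if k = D + c then -1 else 0)"
  define r where "r k = max 0 (mv D W x k)" for k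
  have "mv D W x c = (\<Sum>c'<D. if c' = c then x c' else 0)"
    unfolding mv_def W_def using assms by (intro sum.cong) auto
  then have r_pos: "r c = max 0 (x c)"
    unfolding r_def using assms by simp
  have "mv D W x (D + c) = (\<Sum>c'<D. if c' = c then - x c' else 0)"
    unfolding mv_def W_def by (rule sum.cong) auto
  then have r_neg: "r (D + c) = max 0 (- x c)"
    unfolding r_def using assms by simp
  have "apply_mlp D (id_mlp D) x c = (\<Sum>k<2 * D. W k c * r k)"
    unfolding apply_mlp_def id_mlp_def Let_def relu_def by (simp add: r_def W_def mv_def)
  also have "\<dots> = (\<Sum>k<2 * D. (if k = c then r k else 0) - (if k = D + c then r k else 0))"
    unfolding W_def using assms by (intro sum.cong) auto
  also have "\<dots> = max 0 (x c) - max 0 (- x c)"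
    using assms by (simp add: sum_subtractf r_pos r_neg)
  also have "\<dots> = x c" by simp
  finally show ?thesis .
qed

lemma att_weight_uniform:
  assumes "WK Lr h = (\<lambda>_ _. 0)" and "theta Lr h = (\<lambda>_. 0)"
  shows "att_weight P Lr h p k Y i j = phi Lr h (p i j) / real k"
  unfolding att_weight_def Let_def using assms by (simp add: mv_def dotp_def)

lemma block_apply:
  assumes "\<And>c. X i c + msa P Lr p k (\<lambda>j. layernorm (dim P) (eps P) (n1g Lr) (n1b Lr) (X j)) i c = Z c"
  shows "block P Lr p k X i
    = (\<lambda>c. Z c + apply_mlp (dim P) (ffn Lr) (layernorm (dim P) (eps P) (n2g Lr) (n2b Lr) Z) c)"
  using assms by (simp add: block_def Let_def)

lemma sum_onehot_eq_count:
  assumes "finite A"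
  shows "(\<Sum>i\<in>A. onehot (f i) c) = real (count (image_mset f (mset_set A)) c)"
  using assms by (induction A rule: finite_induct) (auto simp: onehot_def)

lemma gdwl_distinguishes_at_level:
  assumes "gdwl_distinguishes d G H"
  obtains L where "wl_graph_color d G L \<noteq> wl_graph_color d H L" and "0 < L \<longrightarrow> gsize G = gsize H"
proof (cases "gsize G = gsize H")
  case True
  then show ?thesis
    using that assms unfolding gdwl_distinguishes_def by blast
next
  case False
  then have "size (wl_graph_color d G 0) \<noteq> size (wl_graph_color d H 0)"
    unfolding wl_graph_color_def by simp
  then have "wl_graph_color d G 0 \<noteq> wl_graph_color d H 0"
    by metis
  then show ?thesis
    using that[of 0] by simp
qed

definition same_size :: "graph set \<Rightarrow> bool" where
  "same_size \<G> \<longleftrightarrow> (\<forall>\<Gamma>\<in>\<G>. \<forall>\<Gamma>'\<in>\<G>. gsize \<Gamma> = gsize \<Gamma>')"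

locale gdwl_simulation =
  fixes m :: nat and d :: "graph \<Rightarrow> nat \<Rightarrow> nat \<Rightarrow> real" and \<G> :: "graph set"
  assumes finite_graphs: "finite \<G>" and wf_graphs: "\<Gamma> \<in> \<G> \<Longrightarrow> wf_graph m \<Gamma>"
begin

definition nodes :: "(graph \<times> nat) set" where
  "nodes = (SIGMA \<Gamma>:\<G>. {..<gsize \<Gamma>})"

text \<open>Coordinates \<open>0..<N\<close> hold the one-hot colour, coordinate \<open>N\<close> stays zero and coordinate
  \<open>N + 1\<close> receives the attention output. \<open>N\<close> exceeds \<open>m\<close>, every graph size and the number of colours.\<close>

definition N :: nat where
  "N = m + card nodes + 1"

definition colours :: "nat \<Rightarrow> color set" where
  "colours l = (\<lambda>(\<Gamma>, i). wl_color d \<Gamma> l i) ` nodes"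

definition colour_index :: "nat \<Rightarrow> color \<Rightarrow> nat" where
  "colour_index l = to_nat_on (colours l)"

definition slot :: "nat \<Rightarrow> graph \<Rightarrow> nat \<Rightarrow> nat" where
  "slot l \<Gamma> i = colour_index l (wl_color d \<Gamma> l i)"

definition distances :: "real set" where
  "distances = (\<lambda>(\<Gamma>, i, j). d \<Gamma> i j) ` (SIGMA \<Gamma>:\<G>. {..<gsize \<Gamma>} \<times> {..<gsize \<Gamma>})"

definition distance_index :: "real \<Rightarrow> nat" where
  "distance_index = to_nat_on distances"

definition pair_code :: "nat \<Rightarrow> real \<times> color \<Rightarrow> nat" where
  "pair_code l = (\<lambda>(\<delta>, \<gamma>). N * distance_index \<delta> + colour_index l \<gamma>)"

lemma finite_nodes: "finite nodes"
  unfolding nodes_def using finite_graphs by simp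

lemma finite_colours: "finite (colours l)"
  unfolding colours_def using finite_nodes by simp

lemma gsize_less_N: "\<Gamma> \<in> \<G> \<Longrightarrow> gsize \<Gamma> < N"
proof -
  assume "\<Gamma> \<in> \<G>"
  then have "{\<Gamma>} \<times> {..<gsize \<Gamma>} \<subseteq> nodes"
    unfolding nodes_def by auto
  then have "card ({\<Gamma>} \<times> {..<gsize \<Gamma>}) \<le> card nodes"
    by (rule card_mono[OF finite_nodes])
  then have "gsize \<Gamma> \<le> card nodes"
    by (simp add: card_cartesian_product)
  then show ?thesis
    unfolding N_def by simp
qed

lemma wl_color_in_colours: "\<Gamma> \<in> \<G> \<Longrightarrow> i < gsize \<Gamma> \<Longrightarrow> wl_color d \<Gamma> l i \<in> colours l"
  unfolding colours_def nodes_def by force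

lemma colour_index_less_N:
  assumes "\<gamma> \<in> colours l"
  shows "colour_index l \<gamma> < N"
proof -
  have "colour_index l \<gamma> < card (colours l)"
    unfolding colour_index_def using bij_betwE[OF to_nat_on_finite[OF finite_colours]] assms by blast
  also have "card (colours l) \<le> card nodes"
    unfolding colours_def using finite_nodes by (rule card_image_le)
  finally show ?thesis
    unfolding N_def by simp
qed

lemma inj_on_colour_index: "inj_on (colour_index l) (colours l)"
  unfolding colour_index_def by (simp add: inj_on_to_nat_on countable_finite finite_colours)

lemma slot_less_N: "\<Gamma> \<in> \<G> \<Longrightarrow> i < gsize \<Gamma> \<Longrightarrow> slot l \<Gamma> i < N"
  unfolding slot_def by (simp add: colour_index_less_N wl_color_in_colours)

lemma inj_on_pair_code: "inj_on (pair_code l) (distances \<times> colours l)"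
proof -
  have "finite distances"
    unfolding distances_def using finite_graphs by simp
  then have "inj_on distance_index distances"
    unfolding distance_index_def by (simp add: inj_on_to_nat_on countable_finite)
  then show ?thesis
    unfolding pair_code_def using inj_on_colour_index colour_index_less_N
    by (intro inj_on_mixed_radix) auto
qed

definition neighbourhood :: "nat \<Rightarrow> graph \<Rightarrow> nat \<Rightarrow> (real \<times> color) multiset" where
  "neighbourhood l \<Gamma> i = image_mset (\<lambda>u. (d \<Gamma> i u, wl_color d \<Gamma> l u)) (mset_set {..<gsize \<Gamma>})"

lemma wl_color_Suc_neighbourhood: "wl_color d \<Gamma> (Suc l) i = Refine (neighbourhood l \<Gamma> i)"
  by (simp add: neighbourhood_def)

lemma set_neighbourhood_subset:
  assumes "\<Gamma> \<in> \<G>" and "i < gsize \<Gamma>"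
  shows "set_mset (neighbourhood l \<Gamma> i) \<subseteq> distances \<times> colours l"
  unfolding neighbourhood_def distances_def colours_def nodes_def using assms by force

definition onehot_scale :: real where
  "onehot_scale = ln_scale (N + 2) 1 (onehot 0)"

text \<open>The attention output of layer \<open>l + 1\<close> at coordinate \<open>N + 1\<close>.\<close>

definition aggregate :: "nat \<Rightarrow> graph \<Rightarrow> nat \<Rightarrow> real" where
  "aggregate l \<Gamma> i = (\<Sum>j<gsize \<Gamma>.
     real N ^ (N * distance_index (d \<Gamma> i j)) / real (gsize \<Gamma>) * (real N ^ slot l \<Gamma> j / onehot_scale))"

lemma aggregate_eq_sum_mset:
  "aggregate l \<Gamma> i
     = real (\<Sum>x\<in>#image_mset (pair_code l) (neighbourhood l \<Gamma> i). N ^ x) / (real (gsize \<Gamma>) * onehot_scale)"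
proof -
  have "aggregate l \<Gamma> i = (\<Sum>j<gsize \<Gamma>. real (N ^ pair_code l (d \<Gamma> i j, wl_color d \<Gamma> l j)))
      / (real (gsize \<Gamma>) * onehot_scale)"
    unfolding aggregate_def pair_code_def slot_def
    by (simp add: sum_divide_distrib power_add power_mult)
  then show ?thesis
    unfolding neighbourhood_def sum_unfold_sum_mset of_nat_sum
    by (simp add: multiset.map_comp comp_def)
qed

text \<open>Attention averages over all nodes, hence the graph sizes have to agree.\<close>

lemma wl_color_Suc_eq_if_aggregate_eq:
  assumes "\<Gamma> \<in> \<G>" "i < gsize \<Gamma>" and "\<Gamma>' \<in> \<G>" "i' < gsize \<Gamma>'"
    and "gsize \<Gamma> = gsize \<Gamma>'" and "aggregate l \<Gamma> i = aggregate l \<Gamma>' i'"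
  shows "wl_color d \<Gamma> (Suc l) i = wl_color d \<Gamma>' (Suc l) i'"
proof -
  define P P' where "P = image_mset (pair_code l) (neighbourhood l \<Gamma> i)"
    and "P' = image_mset (pair_code l) (neighbourhood l \<Gamma>' i')"
  have "0 < onehot_scale"
    unfolding onehot_scale_def by (simp add: ln_scale_pos)
  then have "real (\<Sum>x\<in>#P. N ^ x) = real (\<Sum>x\<in>#P'. N ^ x)"
    using assms(2,5,6) unfolding aggregate_eq_sum_mset P_def P'_def by simp
  then have "(\<Sum>x\<in>#P. N ^ x) = (\<Sum>x\<in>#P'. N ^ x)"
    by (simp only: of_nat_eq_iff)
  moreover have "size P < N" "size P' < N"
    using gsize_less_N assms(1,3,5) unfolding P_def P'_def neighbourhood_def by auto
  ultimately have "P = P'"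
    by (intro sum_mset_power_inj)
  moreover have "inj_on (pair_code l) (set_mset (neighbourhood l \<Gamma> i) \<union> set_mset (neighbourhood l \<Gamma>' i'))"
    using inj_on_pair_code set_neighbourhood_subset assms(1-4) by (meson Un_least inj_on_subset)
  ultimately show ?thesis
    unfolding P_def P'_def wl_color_Suc_neighbourhood by (simp add: image_mset_inj_on_eq)
qed

text \<open>The token before the feed-forward network of layer \<open>l\<close>. Attention is switched off in
  layer 0, where the tokens are still attribute vectors.\<close>

fun pre_ffn :: "nat \<Rightarrow> graph \<Rightarrow> nat \<Rightarrow> vec" where
  "pre_ffn 0 \<Gamma> i = (\<lambda>c. if c < m then gattr \<Gamma> i ! c else 0)"
| "pre_ffn (Suc l) \<Gamma> i = (\<lambda>c. onehot (slot l \<Gamma> i) c + (if c = Suc N then aggregate l \<Gamma> i else 0))"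

lemma pre_ffn_N:
  assumes "\<Gamma> \<in> \<G>" and "i < gsize \<Gamma>"
  shows "pre_ffn l \<Gamma> i N = 0"
proof (cases l)
  case 0
  then show ?thesis by (simp add: N_def)
next
  case (Suc l')
  then show ?thesis
    using slot_less_N[OF assms, of l'] by (simp add: onehot_def)
qed

lemma pre_ffn_beyond:
  assumes "\<Gamma> \<in> \<G>" and "i < gsize \<Gamma>" and "N + 2 \<le> c"
  shows "pre_ffn l \<Gamma> i c = 0"
proof (cases l)
  case 0
  then show ?thesis
    using assms(3) by (simp add: N_def)
next
  case (Suc l')
  then show ?thesis
    using slot_less_N[OF assms(1,2), of l'] assms(3) by (simp add: onehot_def)
qed

lemma wl_color_eq_if_pre_ffn_eq:
  assumes "0 < l \<longrightarrow> same_size \<G>"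
    and "\<Gamma> \<in> \<G>" "i < gsize \<Gamma>" and "\<Gamma>' \<in> \<G>" "i' < gsize \<Gamma>'"
    and eq: "pre_ffn l \<Gamma> i = pre_ffn l \<Gamma>' i'"
  shows "wl_color d \<Gamma> l i = wl_color d \<Gamma>' l i'"
proof (cases l)
  case 0
  have "wf_graph m \<Gamma>" "wf_graph m \<Gamma>'"
    using wf_graphs assms(2,4) by simp_all
  then have "length (gattr \<Gamma> i) = m" "length (gattr \<Gamma>' i') = m"
    using assms(3,5) unfolding wf_graph_def by simp_all
  moreover have "gattr \<Gamma> i ! c = gattr \<Gamma>' i' ! c" if "c < m" for c
    using fun_cong[OF eq, of c] that 0 by simp
  ultimately have "gattr \<Gamma> i = gattr \<Gamma>' i'"
    by (intro nth_equalityI) simp_all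
  then show ?thesis
    using 0 by simp
next
  case (Suc l')
  have "slot l' \<Gamma> i \<noteq> Suc N" "slot l' \<Gamma>' i' \<noteq> Suc N"
    using slot_less_N[of \<Gamma> i l'] slot_less_N[of \<Gamma>' i' l'] assms(2-5) by simp_all
  then have "aggregate l' \<Gamma> i = aggregate l' \<Gamma>' i'"
    using fun_cong[OF eq, of "Suc N"] Suc by (simp add: onehot_def)
  moreover have "gsize \<Gamma> = gsize \<Gamma>'"
    using assms(1,2,4) Suc unfolding same_size_def by blast
  ultimately show ?thesis
    unfolding Suc by (intro wl_color_Suc_eq_if_aggregate_eq assms(2-5))
qed

abbreviation LN :: "vec \<Rightarrow> vec" where
  "LN x \<equiv> layernorm (N + 2) 1 (\<lambda>_. 1) (\<lambda>_. 0) x"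

definition ffn_mlp :: "nat \<Rightarrow> mlp" where
  "ffn_mlp l = (SOME M. \<forall>\<Gamma> i. (\<Gamma>, i) \<in> nodes \<longrightarrow>
     apply_mlp (N + 2) M (LN (pre_ffn l \<Gamma> i)) = (\<lambda>c. onehot (slot l \<Gamma> i) c - pre_ffn l \<Gamma> i c))"

lemma pre_ffn_eq_if_LN_eq:
  assumes "\<Gamma> \<in> \<G>" "i < gsize \<Gamma>" and "\<Gamma>' \<in> \<G>" "i' < gsize \<Gamma>'"
    and LN_eq: "\<forall>c<N + 2. LN (pre_ffn l \<Gamma> i) c = LN (pre_ffn l \<Gamma>' i') c"
  shows "pre_ffn l \<Gamma> i = pre_ffn l \<Gamma>' i'"
proof
  fix c
  show "pre_ffn l \<Gamma> i c = pre_ffn l \<Gamma>' i' c"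
  proof (cases "c < N + 2")
    case True
    show ?thesis
      by (rule layernorm_plain_inj[of 1 N "N + 2"]) (use LN_eq True pre_ffn_N assms(1-4) in simp_all)
  next
    case False
    then show ?thesis
      using pre_ffn_beyond assms(1-4) by simp
  qed
qed

lemma ffn_mlp_correct:
  assumes "0 < l \<longrightarrow> same_size \<G>" and "(\<Gamma>, i) \<in> nodes"
  shows "apply_mlp (N + 2) (ffn_mlp l) (LN (pre_ffn l \<Gamma> i)) = (\<lambda>c. onehot (slot l \<Gamma> i) c - pre_ffn l \<Gamma> i c)"
proof -
  define target where "target \<iota> = (\<lambda>c. onehot (slot l (fst \<iota>) (snd \<iota>)) c - pre_ffn l (fst \<iota>) (snd \<iota>) c)"
    for \<iota> :: "graph \<times> nat"
  have well_defined: "target \<iota> = target \<iota>'"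
    if mem: "\<iota> \<in> nodes" "\<iota>' \<in> nodes"
      and LN_eq: "\<forall>c<N + 2. LN (pre_ffn l (fst \<iota>) (snd \<iota>)) c = LN (pre_ffn l (fst \<iota>') (snd \<iota>')) c"
    for \<iota> \<iota>'
  proof -
    obtain \<Gamma> i \<Gamma>' i' where \<iota>: "\<iota> = (\<Gamma>, i)" and \<Gamma>: "\<Gamma> \<in> \<G>" "i < gsize \<Gamma>"
      and \<iota>': "\<iota>' = (\<Gamma>', i')" and \<Gamma>': "\<Gamma>' \<in> \<G>" "i' < gsize \<Gamma>'"
      using mem unfolding nodes_def by auto
    have "pre_ffn l \<Gamma> i = pre_ffn l \<Gamma>' i'"
      using pre_ffn_eq_if_LN_eq[OF \<Gamma> \<Gamma>'] LN_eq unfolding \<iota> \<iota>' by simp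
    moreover from this have "wl_color d \<Gamma> l i = wl_color d \<Gamma>' l i'"
      by (rule wl_color_eq_if_pre_ffn_eq[OF assms(1) \<Gamma> \<Gamma>'])
    ultimately show ?thesis
      unfolding target_def slot_def \<iota> \<iota>' by simp
  qed
  have "\<exists>M. \<forall>\<iota>\<in>nodes. apply_mlp (N + 2) M (LN (pre_ffn l (fst \<iota>) (snd \<iota>))) = target \<iota>"
    by (rule mlp_interpolation[OF finite_nodes, of "N + 2" "\<lambda>\<iota>. LN (pre_ffn l (fst \<iota>) (snd \<iota>))" target])
      (rule well_defined)
  then obtain M where M: "\<forall>\<iota>\<in>nodes. apply_mlp (N + 2) M (LN (pre_ffn l (fst \<iota>) (snd \<iota>))) = target \<iota>"
    ..
  have "\<forall>\<Gamma> i. (\<Gamma>, i) \<in> nodes \<longrightarrow>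
      apply_mlp (N + 2) (ffn_mlp l) (LN (pre_ffn l \<Gamma> i)) = (\<lambda>c. onehot (slot l \<Gamma> i) c - pre_ffn l \<Gamma> i c)"
    unfolding ffn_mlp_def by (rule someI[of _ M]) (use M in \<open>auto simp: target_def\<close>)
  then show ?thesis
    using assms(2) by blast
qed

text \<open>Pairing with \<open>value_row\<close> computes \<open>\<Sum>c<N. N^c * (y c - y N)\<close>: subtracting the always-zero
  coordinate \<open>N\<close> cancels the centering done by layer normalization.\<close>

definition value_row :: vec where
  "value_row c = (if c < N then real N ^ c else if c = N then - (\<Sum>c'<N. real N ^ c') else 0)"

lemma dotp_value_row: "dotp (N + 2) value_row y = (\<Sum>c<N. real N ^ c * (y c - y N))"
  unfolding dotp_def value_row_def
  by (simp add: lessThan_Suc sum_distrib_right right_diff_distrib sum_subtractf)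

lemma dotp_value_row_onehot:
  assumes "a < N"
  shows "dotp (N + 2) value_row (LN (onehot a)) = real N ^ a / onehot_scale"
proof -
  have "LN (onehot a) c - LN (onehot a) N = onehot a c / onehot_scale" for c
    unfolding layernorm_plain_diff onehot_scale_def
    using ln_scale_onehot[of a "N + 2" 0] assms by (simp add: onehot_def)
  then have "dotp (N + 2) value_row (LN (onehot a)) = (\<Sum>c<N. if c = a then real N ^ c / onehot_scale else 0)"
    unfolding dotp_value_row by (intro sum.cong) (simp_all add: onehot_def)
  then show ?thesis
    using assms by simp
qed

definition layer_of :: "nat \<Rightarrow> layer" where
  "layer_of l =
     \<lparr>WQ = \<lambda>_ _ _. 0, WK = \<lambda>_ _ _. 0,
      WV = \<lambda>_ r c. if r = 0 then value_row c else 0,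
      WO = \<lambda>_ c r. if 0 < l \<and> c = Suc N \<and> r = 0 then 1 else 0,
      phi = \<lambda>_ p. real N ^ (N * distance_index (p 0)), theta = \<lambda>_ _. 0,
      n1g = \<lambda>_. 1, n1b = \<lambda>_. 0, n2g = \<lambda>_. 1, n2b = \<lambda>_. 0, ffn = ffn_mlp l\<rparr>"

definition sim_ppgt :: "nat \<Rightarrow> ppgt" where
  "sim_ppgt L =
     \<lparr>dim = N + 2, pdim = 1, nheads = 1, nlayers = Suc L, eps = 1,
      Win = \<lambda>c j. if c = j then 1 else 0, bin = \<lambda>_. 0, stem = id_mlp 1, layers = layer_of,
      readout = id_mlp (N + 2), outdim = N + 2\<rparr>"

lemma msa_sim_ppgt:
  "msa (sim_ppgt L) (layer_of l) p k Y i c =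
     (if 0 < l \<and> c = Suc N
      then \<Sum>j<k. real N ^ (N * distance_index (p i j 0)) / real k * dotp (N + 2) value_row (Y j)
      else 0)"
proof -
  have "mv (N + 2) (WO (layer_of l) 0) v c
      = (\<Sum>r<N + 2. if r = 0 then (if 0 < l \<and> c = Suc N then v r else 0) else 0)" for v
    unfolding layer_of_def mv_def by (intro sum.cong) auto
  then have "mv (N + 2) (WO (layer_of l) 0) v c = (if 0 < l \<and> c = Suc N then v 0 else 0)" for v
    by (simp only: sum.delta finite_lessThan) simp
  moreover have "mv (N + 2) (WV (layer_of l) 0) y 0 = dotp (N + 2) value_row y" for y
    unfolding layer_of_def mv_def dotp_def by simp
  ultimately have "mv (N + 2) (WO (layer_of l) 0) (mv (N + 2) (WV (layer_of l) 0) y) c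
      = (if 0 < l \<and> c = Suc N then dotp (N + 2) value_row y else 0)" for y
    by simp
  moreover have "att_weight (sim_ppgt L) (layer_of l) 0 p k Y i j
      = real N ^ (N * distance_index (p i j 0)) / real k" for j
    by (simp add: att_weight_uniform layer_of_def)
  ultimately show ?thesis
    unfolding msa_def by (simp add: sim_ppgt_def sum_distrib_right)
qed

lemma pos_emb_sim_ppgt: "pos_emb (sim_ppgt L) d \<Gamma> i j 0 = d \<Gamma> i j"
  unfolding pos_emb_def sim_ppgt_def by (simp add: apply_id_mlp)

lemma init_tokens_sim_ppgt: "init_tokens m (sim_ppgt L) \<Gamma> i = pre_ffn 0 \<Gamma> i"
proof -
  have "(\<Sum>j<m. (if c = j then 1 else 0) * gattr \<Gamma> i ! j) = (\<Sum>j<m. if j = c then gattr \<Gamma> i ! j else 0)" for c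
    by (intro sum.cong) auto
  then show ?thesis
    unfolding init_tokens_def sim_ppgt_def by auto
qed

lemma tokens_sim_ppgt_step:
  assumes "0 < l \<longrightarrow> same_size \<G>" and "(\<Gamma>, i) \<in> nodes"
    and "\<And>c. tokens m (sim_ppgt L) d \<Gamma> l i c
             + msa (sim_ppgt L) (layer_of l) (pos_emb (sim_ppgt L) d \<Gamma>) (gsize \<Gamma>)
                 (\<lambda>j. LN (tokens m (sim_ppgt L) d \<Gamma> l j)) i c
           = pre_ffn l \<Gamma> i c"
  shows "tokens m (sim_ppgt L) d \<Gamma> (Suc l) i = onehot (slot l \<Gamma> i)"
proof -
  have "tokens m (sim_ppgt L) d \<Gamma> (Suc l) i
      = (\<lambda>c. pre_ffn l \<Gamma> i c + apply_mlp (N + 2) (ffn_mlp l) (LN (pre_ffn l \<Gamma> i)) c)"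
    using block_apply[of "tokens m (sim_ppgt L) d \<Gamma> l" i "sim_ppgt L" "layer_of l"] assms(3)
    by (simp add: sim_ppgt_def layer_of_def)
  also have "\<dots> = onehot (slot l \<Gamma> i)"
    unfolding ffn_mlp_correct[OF assms(1,2)] by simp
  finally show ?thesis .
qed

lemma tokens_sim_ppgt:
  assumes "0 < l \<longrightarrow> same_size \<G>" and "\<Gamma> \<in> \<G>" and "i < gsize \<Gamma>"
  shows "tokens m (sim_ppgt L) d \<Gamma> (Suc l) i = onehot (slot l \<Gamma> i)"
  using assms(1,3)
proof (induction l arbitrary: i)
  case 0
  show ?case
    using 0 assms(2) by (intro tokens_sim_ppgt_step) (simp_all add: nodes_def msa_sim_ppgt init_tokens_sim_ppgt)
next
  case (Suc l)
  have onehot: "tokens m (sim_ppgt L) d \<Gamma> (Suc l) j = onehot (slot l \<Gamma> j)" if "j < gsize \<Gamma>" for j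
    using Suc.IH Suc.prems(1) that by simp
  have "(\<Sum>j<gsize \<Gamma>. real N ^ (N * distance_index (pos_emb (sim_ppgt L) d \<Gamma> i j 0)) / real (gsize \<Gamma>)
          * dotp (N + 2) value_row (LN (tokens m (sim_ppgt L) d \<Gamma> (Suc l) j)))
      = aggregate l \<Gamma> i"
    unfolding aggregate_def pos_emb_sim_ppgt
    using onehot dotp_value_row_onehot slot_less_N[OF assms(2)] by (intro sum.cong) simp_all
  then show ?case
    using Suc.prems assms(2) onehot
    by (intro tokens_sim_ppgt_step) (simp_all add: nodes_def msa_sim_ppgt)
qed

lemma ppgt_output_sim_ppgt:
  assumes "0 < L \<longrightarrow> same_size \<G>" and "\<Gamma> \<in> \<G>" and "c < N + 2"
  shows "ppgt_output m (sim_ppgt L) d \<Gamma> c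
    = real (count (image_mset (colour_index L) (wl_graph_color d \<Gamma> L)) c)"
proof -
  have "ppgt_output m (sim_ppgt L) d \<Gamma> c = (\<Sum>i<gsize \<Gamma>. tokens m (sim_ppgt L) d \<Gamma> (Suc L) i c)"
    unfolding ppgt_output_def using assms(3) by (simp add: sim_ppgt_def apply_id_mlp)
  also have "\<dots> = (\<Sum>i<gsize \<Gamma>. onehot (slot L \<Gamma> i) c)"
    using tokens_sim_ppgt[OF assms(1,2)] by simp
  also have "\<dots> = real (count (image_mset (slot L \<Gamma>) (mset_set {..<gsize \<Gamma>})) c)"
    by (simp add: sum_onehot_eq_count)
  finally show ?thesis
    unfolding wl_graph_color_def slot_def by (simp add: multiset.map_comp comp_def)
qed

lemma sim_ppgt_distinguishes:
  assumes "0 < L \<longrightarrow> same_size \<G>" and "\<Gamma> \<in> \<G>" "\<Gamma>' \<in> \<G>"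
    and "wl_graph_color d \<Gamma> L \<noteq> wl_graph_color d \<Gamma>' L"
  shows "ppgt_distinguishes m d (sim_ppgt L) \<Gamma> \<Gamma>'"
proof -
  have colours: "set_mset (wl_graph_color d \<Delta> L) \<subseteq> colours L" if "\<Delta> \<in> \<G>" for \<Delta>
    unfolding wl_graph_color_def using wl_color_in_colours[OF that] by auto
  then have "inj_on (colour_index L) (set_mset (wl_graph_color d \<Gamma> L) \<union> set_mset (wl_graph_color d \<Gamma>' L))"
    using inj_on_colour_index assms(2,3) by (meson Un_least inj_on_subset)
  then have "image_mset (colour_index L) (wl_graph_color d \<Gamma> L) \<noteq> image_mset (colour_index L) (wl_graph_color d \<Gamma>' L)"
    using image_mset_inj_on_eq assms(4) by blast
  then obtain c where c: "count (image_mset (colour_index L) (wl_graph_color d \<Gamma> L)) c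
      \<noteq> count (image_mset (colour_index L) (wl_graph_color d \<Gamma>' L)) c"
    by (meson multiset_eqI)
  have "c < N"
  proof (rule ccontr)
    assume "\<not> c < N"
    then have outside: "count (image_mset (colour_index L) (wl_graph_color d \<Delta> L)) c = 0" if "\<Delta> \<in> \<G>" for \<Delta>
      using colours[OF that] colour_index_less_N by (force simp: count_eq_zero_iff)
    show False
      using c outside[OF assms(2)] outside[OF assms(3)] by simp
  qed
  then have "ppgt_output m (sim_ppgt L) d \<Gamma> c \<noteq> ppgt_output m (sim_ppgt L) d \<Gamma>' c"
    using ppgt_output_sim_ppgt[OF assms(1,2)] ppgt_output_sim_ppgt[OF assms(1,3)] c by simp
  moreover have "c < outdim (sim_ppgt L)"
    using \<open>c < N\<close> by (simp add: sim_ppgt_def)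
  ultimately show ?thesis
    unfolding ppgt_distinguishes_def by blast
qed

lemma valid_sim_ppgt: "valid_ppgt (sim_ppgt L)"
  unfolding valid_ppgt_def sim_ppgt_def by simp

end

theorem proposition1:
  fixes m n :: nat and d :: "graph \<Rightarrow> nat \<Rightarrow> nat \<Rightarrow> real" and G H :: graph
  assumes "gen_dist m d"
    and "wf_graph m G" and "wf_graph m H"
    and "gsize G \<le> n" and "gsize H \<le> n"
    and "gdwl_distinguishes d G H"
  shows "\<exists>P. valid_ppgt P \<and> ppgt_distinguishes m d P G H"
proof -
  obtain L where L: "wl_graph_color d G L \<noteq> wl_graph_color d H L"
    and size: "0 < L \<longrightarrow> gsize G = gsize H"
    using gdwl_distinguishes_at_level[OF assms(6)] by blast
  interpret gdwl_simulation m d "{G, H}"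
    using assms(2,3) by unfold_locales auto
  have "0 < L \<longrightarrow> same_size {G, H}"
    using size unfolding same_size_def by auto
  then show ?thesis
    using sim_ppgt_distinguishes[of L G H] valid_sim_ppgt L by blast
qed

end
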